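(* Let $\mathcal{X}$ be a feature space, $p(\boldsymbol{x},y)$ a joint density on $\mathcal{X}\times\{+1,-1\}$ with class priors $\pi_+=p(y=+1)$, $\pi_-=1-\pi_+$ and class-conditional densities $p_+(\boldsymbol{x})=p(\boldsymbol{x}\mid y=+1)$, $p_-(\boldsymbol{x})=p(\boldsymbol{x}\mid y=-1)$. Let pairs $(\boldsymbol{x}_i,\boldsymbol{x}_i')$, $i=1,\dots,n$, be drawn i.i.d. from the density $$\widetilde{p}(\boldsymbol{x},\boldsymbol{x}')=\frac{\pi_+^2p_+(\boldsymbol{x})p_+(\boldsymbol{x}')+\pi_-^2p_-(\boldsymbol{x})p_-(\boldsymbol{x}')+\pi_+\pi_-p_+(\boldsymbol{x})p_-(\boldsymbol{x}')}{\pi_+^2+\pi_-^2+\pi_+\pi_-},$$ and let $\widetilde{\mathcal{D}}_+=\{\boldsymbol{x}_i\}_{i=1}^n$ and $\widetilde{\mathcal{D}}_-=\{\boldsymbol{x}_i'\}_{i=1}^n$. Then the points of $\widetilde{\mathcal{D}}_+$ are independently drawn from $$\widetilde{p}_+(\boldsymbol{x})=\frac{\pi_+}{\pi_-^2+\pi_+}p_+(\boldsymbol{x})+\frac{\pi_-^2}{\pi_-^2+\pi_+}p_-(\boldsymbol{x}),$$ and the points of $\widetilde{\mathcal{D}}_-$ are independently drawn from $$\widetilde{p}_-(\boldsymbol{x}')=\frac{\pi_+^2}{\pi_+^2+\pi_-}p_+(\boldsymbol{x}')+\frac{\pi_-}{\pi_+^2+\pi_-}p_-(\boldsymbol{x}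').$$
   Context: $\widetilde{p}(\boldsymbol{x},\boldsymbol{x}')$ is the density of pairwise comparison data: pairs of unlabeled points whose (unobserved) labels $(y,y')$ are conditioned to lie in $\{(+1,+1),(+1,-1),(-1,-1)\}$, where the two labeled points are drawn independently from $p(\boldsymbol{x},y)$. *)

theory Defs
  imports "HOL-Probability.Probability"
begin

text \<open>Pairwise-comparison density on pairs, with class prior \<pi> (= pi_+),
  class-conditional densities pp (= p_+) and pn (= p_-); pi_- = 1 - \<pi>.\<close>
definition pcomp_pair :: "real \<Rightarrow> ('a \<Rightarrow> real) \<Rightarrow> ('a \<Rightarrow> real) \<Rightarrow> 'a \<times> 'a \<Rightarrow> real" where
  "pcomp_pair \<pi> pp pn z =
     (\<pi>\<^sup>2 * pp (fst z) * pp (snd z) + (1 - \<pi>)\<^sup>2 * pn (fst z) * pn (snd z)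
      + \<pi> * (1 - \<pi>) * pp (fst z) * pn (snd z))
     / (\<pi>\<^sup>2 + (1 - \<pi>)\<^sup>2 + \<pi> * (1 - \<pi>))"

definition pcomp_pos :: "real \<Rightarrow> ('a \<Rightarrow> real) \<Rightarrow> ('a \<Rightarrow> real) \<Rightarrow> 'a \<Rightarrow> real" where
  "pcomp_pos \<pi> pp pn x =
     \<pi> / ((1 - \<pi>)\<^sup>2 + \<pi>) * pp x + (1 - \<pi>)\<^sup>2 / ((1 - \<pi>)\<^sup>2 + \<pi>) * pn x"

definition pcomp_neg :: "real \<Rightarrow> ('a \<Rightarrow> real) \<Rightarrow> ('a \<Rightarrow> real) \<Rightarrow> 'a \<Rightarrow> real" where
  "pcomp_neg \<pi> pp pn x =
     \<pi>\<^sup>2 / (\<pi>\<^sup>2 + (1 - \<pi>)) * pp x + (1 - \<pi>) / (\<pi>\<^sup>2 + (1 - \<pi>)) * pn x"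

end

theory Submission
  imports Defs
begin

text \<open>The three normalising constants in the definitions all equal \<open>1 - \<pi> + \<pi>\<^sup>2\<close>.
  Integrating the pair density over \<open>x'\<close> leaves the weight \<open>\<pi>\<^sup>2 + \<pi> (1 - \<pi>) = \<pi>\<close> on \<open>p\<^sub>+(x)\<close>
  and \<open>(1 - \<pi>)\<^sup>2\<close> on \<open>p\<^sub>-(x)\<close>, so the first marginal is the stated mixture; symmetrically for
  the second marginal. Coordinatewise projection of i.i.d. pairs gives i.i.d. points whose law
  is the corresponding marginal.\<close>

lemma nn_integral_mixture:
  fixes a b :: real
  assumes [measurable]: "p \<in> borel_measurable M" "q \<in> borel_measurable M"
    and "\<And>x. x \<in> space M \<Longrightarrow> 0 \<le> p x" "\<And>x. x \<in> space M \<Longrightarrow> 0 \<le> q x"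
    and "(\<integral>\<^sup>+ x. ennreal (p x) \<partial>M) = 1" "(\<integral>\<^sup>+ x. ennreal (q x) \<partial>M) = 1"
    and "0 \<le> a" "0 \<le> b"
  shows "(\<integral>\<^sup>+ x. ennreal (a * p x + b * q x) \<partial>M) = ennreal (a + b)"
proof -
  have "(\<integral>\<^sup>+ x. ennreal (a * p x + b * q x) \<partial>M)
      = (\<integral>\<^sup>+ x. ennreal a * ennreal (p x) + ennreal b * ennreal (q x) \<partial>M)"
    using assms by (intro nn_integral_cong) (simp add: ennreal_plus ennreal_mult)
  also have "\<dots> = ennreal a * (\<integral>\<^sup>+ x. ennreal (p x) \<partial>M) + ennreal b * (\<integral>\<^sup>+ x. ennreal (q x) \<partial>M)"
    by (simp add: nn_integral_add nn_integral_cmult)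
  also have "\<dots> = ennreal (a + b)"
    using assms by (simp add: ennreal_plus)
  finally show ?thesis .
qed

lemma prob_space_density_iff_nn_integral:
  assumes "f \<in> borel_measurable M"
  shows "prob_space (density M f) \<longleftrightarrow> (\<integral>\<^sup>+ x. f x \<partial>M) = 1"
proof -
  have "emeasure (density M f) (space M) = (\<integral>\<^sup>+ x. f x \<partial>M)"
    using assms by (subst emeasure_density) (auto intro!: nn_integral_cong simp: indicator_def)
  then show ?thesis
    by (auto simp: prob_space_def prob_space_axioms_def intro!: finite_measureI)
qed

lemma distr_PiM_restrict_compose:
  assumes "finite I" and "\<And>i. i \<in> I \<Longrightarrow> prob_space (N i)"
    and g: "\<And>i. i \<in> I \<Longrightarrow> g \<in> measurable (N i) (M i)"
  shows "distr (PiM I N) (PiM I M) (\<lambda>\<omega>. \<lambda>i\<in>I. g (\<omega> i)) = PiM I (\<lambda>i. distr (N i) (M i) g)"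
proof -
  let ?D = "\<lambda>i. distr (N i) (M i) g"
  have sets_D: "sets (PiM I ?D) = sets (PiM I M)"
    by (rule sets_PiM_cong) simp_all
  have "distr (PiM I N) (PiM I M) (\<lambda>\<omega>. \<lambda>i\<in>I. g (\<omega> i)) = distr (PiM I N) (PiM I ?D) (compose I g)"
    using sets_D by (intro distr_cong) (simp_all add: compose_def)
  also have "\<dots> = PiM I (\<lambda>i. distr (N i) (?D i) g)"
    using assms by (intro distr_PiM_finite_prob_space') (auto intro: prob_space.prob_space_distr)
  also have "\<dots> = PiM I ?D"
    by (intro PiM_cong refl distr_cong) simp_all
  finally show ?thesis .
qed

lemma pcomp_normalisers:
  fixes \<pi> :: real
  shows "\<pi>\<^sup>2 + (1 - \<pi>)\<^sup>2 + \<pi> * (1 - \<pi>) = 1 - \<pi> + \<pi>\<^sup>2"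
    and "(1 - \<pi>)\<^sup>2 + \<pi> = 1 - \<pi> + \<pi>\<^sup>2"
    and "\<pi>\<^sup>2 + (1 - \<pi>) = 1 - \<pi> + \<pi>\<^sup>2"
    and "0 < 1 - \<pi> + \<pi>\<^sup>2"
proof -
  show "\<pi>\<^sup>2 + (1 - \<pi>)\<^sup>2 + \<pi> * (1 - \<pi>) = 1 - \<pi> + \<pi>\<^sup>2" "(1 - \<pi>)\<^sup>2 + \<pi> = 1 - \<pi> + \<pi>\<^sup>2"
    "\<pi>\<^sup>2 + (1 - \<pi>) = 1 - \<pi> + \<pi>\<^sup>2"
    by (simp_all add: power2_eq_square algebra_simps)
  have "1 - \<pi> + \<pi>\<^sup>2 = (\<pi> - 1/2)\<^sup>2 + 3/4"
    by (simp add: power2_eq_square algebra_simps)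
  then show "0 < 1 - \<pi> + \<pi>\<^sup>2"
    using zero_le_power2[of "\<pi> - 1/2"] by linarith
qed

lemma pcomp_pair_eq_mixture_snd:
  "pcomp_pair \<pi> pp pn (x, y) =
     \<pi>\<^sup>2 * pp x / (1 - \<pi> + \<pi>\<^sup>2) * pp y
     + ((1 - \<pi>)\<^sup>2 * pn x + \<pi> * (1 - \<pi>) * pp x) / (1 - \<pi> + \<pi>\<^sup>2) * pn y"
  unfolding pcomp_pair_def pcomp_normalisers(1) times_divide_eq_left add_divide_distrib[symmetric]
  by (rule arg_cong2[where f = "(/)"]) (simp_all add: algebra_simps)

lemma pcomp_pair_eq_mixture_fst:
  "pcomp_pair \<pi> pp pn (x, y) =
     (\<pi>\<^sup>2 * pp y + \<pi> * (1 - \<pi>) * pn y) / (1 - \<pi> + \<pi>\<^sup>2) * pp x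
     + (1 - \<pi>)\<^sup>2 * pn y / (1 - \<pi> + \<pi>\<^sup>2) * pn x"
  unfolding pcomp_pair_def pcomp_normalisers(1) times_divide_eq_left add_divide_distrib[symmetric]
  by (rule arg_cong2[where f = "(/)"]) (simp_all add: algebra_simps)

lemma borel_measurable_pcomp_pair [measurable]:
  assumes [measurable]: "pp \<in> borel_measurable M" "pn \<in> borel_measurable M"
  shows "pcomp_pair \<pi> pp pn \<in> borel_measurable (M \<Otimes>\<^sub>M M)"
  unfolding pcomp_pair_def by measurable

lemma borel_measurable_pcomp_pos [measurable]:
  assumes [measurable]: "pp \<in> borel_measurable M" "pn \<in> borel_measurable M"
  shows "pcomp_pos \<pi> pp pn \<in> borel_measurable M"
  unfolding pcomp_pos_def by measurable

lemma borel_measurable_pcomp_neg [measurable]: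
  assumes [measurable]: "pp \<in> borel_measurable M" "pn \<in> borel_measurable M"
  shows "pcomp_neg \<pi> pp pn \<in> borel_measurable M"
  unfolding pcomp_neg_def by measurable

locale pcomp_model =
  fixes M :: "'a measure" and \<pi> :: real and pp pn :: "'a \<Rightarrow> real"
  assumes M_sigma_finite: "sigma_finite_measure M"
    and prior: "0 \<le> \<pi>" "\<pi> \<le> 1"
    and pp_borel [measurable]: "pp \<in> borel_measurable M"
    and pp_nonneg: "\<And>x. x \<in> space M \<Longrightarrow> 0 \<le> pp x"
    and pp_integral: "(\<integral>\<^sup>+ x. ennreal (pp x) \<partial>M) = 1"
    and pn_borel [measurable]: "pn \<in> borel_measurable M"
    and pn_nonneg: "\<And>x. x \<in> space M \<Longrightarrow> 0 \<le> pn x"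
    and pn_integral: "(\<integral>\<^sup>+ x. ennreal (pn x) \<partial>M) = 1"
begin

abbreviation "P\<^sub>p\<^sub>a\<^sub>i\<^sub>r \<equiv> density (M \<Otimes>\<^sub>M M) (\<lambda>z. ennreal (pcomp_pair \<pi> pp pn z))"
abbreviation "P\<^sub>p\<^sub>o\<^sub>s \<equiv> density M (\<lambda>x. ennreal (pcomp_pos \<pi> pp pn x))"
abbreviation "P\<^sub>n\<^sub>e\<^sub>g \<equiv> density M (\<lambda>x. ennreal (pcomp_neg \<pi> pp pn x))"

lemma nn_integral_class_mixture:
  "0 \<le> a \<Longrightarrow> 0 \<le> b \<Longrightarrow> (\<integral>\<^sup>+ x. ennreal (a * pp x + b * pn x) \<partial>M) = ennreal (a + b)"
  by (rule nn_integral_mixture) (use pp_nonneg pn_nonneg pp_integral pn_integral in auto)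

lemma nn_integral_pcomp_pair_snd:
  assumes "x \<in> space M"
  shows "(\<integral>\<^sup>+ y. ennreal (pcomp_pair \<pi> pp pn (x, y)) \<partial>M) = ennreal (pcomp_pos \<pi> pp pn x)"
proof -
  let ?Z = "1 - \<pi> + \<pi>\<^sup>2"
  have "(\<integral>\<^sup>+ y. ennreal (pcomp_pair \<pi> pp pn (x, y)) \<partial>M)
      = ennreal (\<pi>\<^sup>2 * pp x / ?Z + ((1 - \<pi>)\<^sup>2 * pn x + \<pi> * (1 - \<pi>) * pp x) / ?Z)"
    unfolding pcomp_pair_eq_mixture_snd
    using assms prior pp_nonneg pn_nonneg pcomp_normalisers(4)[of \<pi>]
    by (intro nn_integral_class_mixture) auto
  also have "\<pi>\<^sup>2 * pp x / ?Z + ((1 - \<pi>)\<^sup>2 * pn x + \<pi> * (1 - \<pi>) * pp x) / ?Z = pcomp_pos \<pi> pp pn x"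
    unfolding pcomp_pos_def pcomp_normalisers(2) times_divide_eq_left add_divide_distrib[symmetric]
    by (rule arg_cong2[where f = "(/)"]) (simp_all add: power2_eq_square algebra_simps)
  finally show ?thesis .
qed

lemma nn_integral_pcomp_pair_fst:
  assumes "y \<in> space M"
  shows "(\<integral>\<^sup>+ x. ennreal (pcomp_pair \<pi> pp pn (x, y)) \<partial>M) = ennreal (pcomp_neg \<pi> pp pn y)"
proof -
  let ?Z = "1 - \<pi> + \<pi>\<^sup>2"
  have "(\<integral>\<^sup>+ x. ennreal (pcomp_pair \<pi> pp pn (x, y)) \<partial>M)
      = ennreal ((\<pi>\<^sup>2 * pp y + \<pi> * (1 - \<pi>) * pn y) / ?Z + (1 - \<pi>)\<^sup>2 * pn y / ?Z)"
    unfolding pcomp_pair_eq_mixture_fst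
    using assms prior pp_nonneg pn_nonneg pcomp_normalisers(4)[of \<pi>]
    by (intro nn_integral_class_mixture) auto
  also have "(\<pi>\<^sup>2 * pp y + \<pi> * (1 - \<pi>) * pn y) / ?Z + (1 - \<pi>)\<^sup>2 * pn y / ?Z = pcomp_neg \<pi> pp pn y"
    unfolding pcomp_neg_def pcomp_normalisers(3) times_divide_eq_left add_divide_distrib[symmetric]
    by (rule arg_cong2[where f = "(/)"]) (simp_all add: power2_eq_square algebra_simps)
  finally show ?thesis .
qed

lemma prob_space_pcomp_pos: "prob_space P\<^sub>p\<^sub>o\<^sub>s"
proof -
  have "(\<integral>\<^sup>+ x. ennreal (pcomp_pos \<pi> pp pn x) \<partial>M) = ennreal (\<pi> / ((1 - \<pi>)\<^sup>2 + \<pi>) + (1 - \<pi>)\<^sup>2 / ((1 - \<pi>)\<^sup>2 + \<pi>))"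
    unfolding pcomp_pos_def using prior by (intro nn_integral_class_mixture) auto
  also have "\<dots> = 1"
    using pcomp_normalisers(2,4)[of \<pi>] by (simp add: add_divide_distrib[symmetric])
  finally show ?thesis
    by (simp add: prob_space_density_iff_nn_integral)
qed

lemma prob_space_pcomp_neg: "prob_space P\<^sub>n\<^sub>e\<^sub>g"
proof -
  have "(\<integral>\<^sup>+ x. ennreal (pcomp_neg \<pi> pp pn x) \<partial>M) = ennreal (\<pi>\<^sup>2 / (\<pi>\<^sup>2 + (1 - \<pi>)) + (1 - \<pi>) / (\<pi>\<^sup>2 + (1 - \<pi>)))"
    unfolding pcomp_neg_def using prior by (intro nn_integral_class_mixture) auto
  also have "\<dots> = 1"
    using pcomp_normalisers(3,4)[of \<pi>] by (simp add: add_divide_distrib[symmetric])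
  finally show ?thesis
    by (simp add: prob_space_density_iff_nn_integral)
qed

lemma prob_space_pcomp_pair: "prob_space P\<^sub>p\<^sub>a\<^sub>i\<^sub>r"
proof -
  interpret sigma_finite_measure M by (rule M_sigma_finite)
  have "(\<integral>\<^sup>+ z. ennreal (pcomp_pair \<pi> pp pn z) \<partial>(M \<Otimes>\<^sub>M M))
      = (\<integral>\<^sup>+ x. \<integral>\<^sup>+ y. ennreal (pcomp_pair \<pi> pp pn (x, y)) \<partial>M \<partial>M)"
    by (simp add: nn_integral_fst[symmetric])
  also have "\<dots> = (\<integral>\<^sup>+ x. ennreal (pcomp_pos \<pi> pp pn x) \<partial>M)"
    by (intro nn_integral_cong nn_integral_pcomp_pair_snd)
  also have "\<dots> = 1"
    using prob_space_pcomp_pos by (simp add: prob_space_density_iff_nn_integral)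
  finally show ?thesis
    by (simp add: prob_space_density_iff_nn_integral)
qed

lemma distributed_pcomp_pair:
  "distributed P\<^sub>p\<^sub>a\<^sub>i\<^sub>r (M \<Otimes>\<^sub>M M) (\<lambda>z. (fst z, snd z)) (\<lambda>z. ennreal (pcomp_pair \<pi> pp pn z))"
  by (simp add: distributed_def distr_id2)

lemma distr_fst_pcomp_pair: "distr P\<^sub>p\<^sub>a\<^sub>i\<^sub>r M fst = P\<^sub>p\<^sub>o\<^sub>s"
proof -
  interpret prob_space P\<^sub>p\<^sub>a\<^sub>i\<^sub>r by (rule prob_space_pcomp_pair)
  have marginal: "distributed P\<^sub>p\<^sub>a\<^sub>i\<^sub>r M fst (\<lambda>x. \<integral>\<^sup>+ y. ennreal (pcomp_pair \<pi> pp pn (x, y)) \<partial>M)"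
    by (rule distr_marginal1[OF M_sigma_finite M_sigma_finite distributed_pcomp_pair])
  then have "distr P\<^sub>p\<^sub>a\<^sub>i\<^sub>r M fst = density M (\<lambda>x. \<integral>\<^sup>+ y. ennreal (pcomp_pair \<pi> pp pn (x, y)) \<partial>M)"
    by (rule distributed_distr_eq_density)
  also have "\<dots> = P\<^sub>p\<^sub>o\<^sub>s"
    using distributed_borel_measurable[OF marginal]
    by (intro density_cong) (simp_all add: nn_integral_pcomp_pair_snd)
  finally show ?thesis .
qed

lemma distr_snd_pcomp_pair: "distr P\<^sub>p\<^sub>a\<^sub>i\<^sub>r M snd = P\<^sub>n\<^sub>e\<^sub>g"
proof -
  interpret prob_space P\<^sub>p\<^sub>a\<^sub>i\<^sub>r by (rule prob_space_pcomp_pair)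
  have marginal: "distributed P\<^sub>p\<^sub>a\<^sub>i\<^sub>r M snd (\<lambda>y. \<integral>\<^sup>+ x. ennreal (pcomp_pair \<pi> pp pn (x, y)) \<partial>M)"
    by (rule distr_marginal2[OF M_sigma_finite M_sigma_finite distributed_pcomp_pair])
  then have "distr P\<^sub>p\<^sub>a\<^sub>i\<^sub>r M snd = density M (\<lambda>y. \<integral>\<^sup>+ x. ennreal (pcomp_pair \<pi> pp pn (x, y)) \<partial>M)"
    by (rule distributed_distr_eq_density)
  also have "\<dots> = P\<^sub>n\<^sub>e\<^sub>g"
    using distributed_borel_measurable[OF marginal]
    by (intro density_cong) (simp_all add: nn_integral_pcomp_pair_fst)
  finally show ?thesis .
qed

end

theorem theorem2:
  fixes M :: "'a measure" and \<pi> :: real and pp pn :: "'a \<Rightarrow> real" and n :: nat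
  assumes "sigma_finite_measure M"
    and "0 < \<pi>" and "\<pi> < 1"
    and "pp \<in> borel_measurable M" and "\<And>x. x \<in> space M \<Longrightarrow> 0 \<le> pp x"
    and "(\<integral>\<^sup>+ x. ennreal (pp x) \<partial>M) = 1"
    and "pn \<in> borel_measurable M" and "\<And>x. x \<in> space M \<Longrightarrow> 0 \<le> pn x"
    and "(\<integral>\<^sup>+ x. ennreal (pn x) \<partial>M) = 1"
  shows "distr (PiM {..<n} (\<lambda>_. density (M \<Otimes>\<^sub>M M) (\<lambda>z. ennreal (pcomp_pair \<pi> pp pn z))))
              (PiM {..<n} (\<lambda>_. M)) (\<lambda>\<omega>. \<lambda>i\<in>{..<n}. fst (\<omega> i))
           = PiM {..<n} (\<lambda>_. density M (\<lambda>x. ennreal (pcomp_pos \<pi> pp pn x)))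
       \<and> distr (PiM {..<n} (\<lambda>_. density (M \<Otimes>\<^sub>M M) (\<lambda>z. ennreal (pcomp_pair \<pi> pp pn z))))
              (PiM {..<n} (\<lambda>_. M)) (\<lambda>\<omega>. \<lambda>i\<in>{..<n}. snd (\<omega> i))
           = PiM {..<n} (\<lambda>_. density M (\<lambda>x. ennreal (pcomp_neg \<pi> pp pn x)))"
proof -
  interpret pcomp_model M \<pi> pp pn
    using assms by (simp add: pcomp_model_def)
  have iid: "distr (PiM {..<n} (\<lambda>_. P\<^sub>p\<^sub>a\<^sub>i\<^sub>r)) (PiM {..<n} (\<lambda>_. M)) (\<lambda>\<omega>. \<lambda>i\<in>{..<n}. g (\<omega> i))
      = PiM {..<n} (\<lambda>_. distr P\<^sub>p\<^sub>a\<^sub>i\<^sub>r M g)" if "g \<in> measurable (M \<Otimes>\<^sub>M M) M" for g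
    using that prob_space_pcomp_pair by (intro distr_PiM_restrict_compose) simp_all
  show ?thesis
    using iid[OF measurable_fst] iid[OF measurable_snd]
    by (simp only: distr_fst_pcomp_pair distr_snd_pcomp_pair)
qed

end
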